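(* Let $(X,d)$ be a metric space, $\mu$ a non-atomic Borel measure on $X$, $m$ a Borel measure on $X$ and $0<p<\infty$. If $\rho$ is a $p$-weak upper gradient of a function $f$ and $\varepsilon>0$, then there exists an upper gradient $\rho_\varepsilon$ of $f$ (with respect to $\Gamma^\mu$) such that $\rho_\varepsilon\ge\rho$ and $\|\rho-\rho_\varepsilon\|_{L^p(m)}<\varepsilon$.
   Context: A path is a continuous map $\gamma:[a,b]\to X$; a subpath is a restriction to a subinterval, trivial if that interval is a point; $\mathrm{Im}(\gamma)=\gamma([a,b])$. $\mu$ non-atomic: $\mu(\{x\})=0$ for all $x$. $\Gamma^\mu$ is the set of all non-trivial injective paths $\gamma$ with $0<\mu(\mathrm{Im}(\tilde\gamma))<\infty$ for every non-trivial subpath $\tilde\gamma$. For Borel $g\ge0$, $\int_\gamma g:=\int_{\mathrm{Im}(\gamma)}g\,d\mu$. For $\Gamma\subset\Gamma^\mu$, $\mathrm{Mod}_p(\Gamma)=\inf\int_Xg^p\,dm$ over Borel $g:X\to[0,\infty]$ with $\int_\gamma g\ge1$ for all $\gamma\in\Gamma$; a property holds for $p$-almost every path if the set of paths in $\Gamma^\mu$ where it fails has $p$-modulus zero. A Borel $\rho:X\to[0,\infty]$ is an upper gradient of $f:X\to[-\infty,\infty]$ with respect to $\Gamma^\mu$ if $|f(x)-f(y)|\le\int_\gamma\rho$ for every $\gamma\in\Gamma^\mu$ with endpoints $x,y$ such that $f(x),f(y)$ are finite; it is a $p$-weak upper gradient if $|f(x)-f(y)|\le\int_\gamma\rho$ for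 $p$-almost every $\gamma\in\Gamma^\mu$ with endpoints $x,y$. *)

theory Defs
  imports "HOL-Analysis.Analysis"
begin

text \<open>A path \<gamma>:[a,b] \<rightarrow> X is represented as a triple (a, b, \<gamma>); only the values of \<gamma> on {a..b} matter.\<close>
type_synonym 'a path = "real \<times> real \<times> (real \<Rightarrow> 'a)"

definition path_Im :: "'a path \<Rightarrow> 'a set" where
  "path_Im P = (case P of (a, b, \<gamma>) \<Rightarrow> \<gamma> ` {a..b})"

definition path_start :: "'a path \<Rightarrow> 'a" where
  "path_start P = (case P of (a, b, \<gamma>) \<Rightarrow> \<gamma> a)"

definition path_end :: "'a path \<Rightarrow> 'a" where
  "path_end P = (case P of (a, b, \<gamma>) \<Rightarrow> \<gamma> b)"

definition Gamma_mu :: "'a::metric_space measure \<Rightarrow> 'a path set" where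
  "Gamma_mu \<mu> = {(a, b, \<gamma>). a < b \<and> continuous_on {a..b} \<gamma> \<and> inj_on \<gamma> {a..b} \<and>
     (\<forall>c d. a \<le> c \<and> c < d \<and> d \<le> b \<longrightarrow>
        0 < emeasure \<mu> (\<gamma> ` {c..d}) \<and> emeasure \<mu> (\<gamma> ` {c..d}) < \<infinity>)}"

definition path_integral :: "'a measure \<Rightarrow> ('a \<Rightarrow> ennreal) \<Rightarrow> 'a path \<Rightarrow> ennreal" where
  "path_integral \<mu> g P = set_nn_integral \<mu> (path_Im P) g"

definition epow :: "real \<Rightarrow> ennreal \<Rightarrow> ennreal" where
  "epow p t = (if t = \<infinity> then \<infinity> else ennreal (enn2real t powr p))"

definition p_modulus :: "'a::metric_space measure \<Rightarrow> 'a measure \<Rightarrow> real \<Rightarrow> 'a path set \<Rightarrow> ennreal" where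
  "p_modulus \<mu> m p \<Gamma> =
     (INF g \<in> {g. g \<in> borel_measurable borel \<and> (\<forall>\<gamma>\<in>\<Gamma>. path_integral \<mu> g \<gamma> \<ge> 1)}.
        \<integral>\<^sup>+ x. epow p (g x) \<partial>m)"

definition upper_gradient ::
  "'a::metric_space measure \<Rightarrow> ('a \<Rightarrow> ereal) \<Rightarrow> ('a \<Rightarrow> ennreal) \<Rightarrow> bool" where
  "upper_gradient \<mu> f \<rho> \<longleftrightarrow> \<rho> \<in> borel_measurable borel \<and>
     (\<forall>\<gamma>\<in>Gamma_mu \<mu>. \<bar>f (path_start \<gamma>)\<bar> \<noteq> \<infinity> \<and> \<bar>f (path_end \<gamma>)\<bar> \<noteq> \<infinity> \<longrightarrow>
        \<bar>f (path_start \<gamma>) - f (path_end \<gamma>)\<bar> \<le> enn2ereal (path_integral \<mu> \<rho> \<gamma>))"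

definition p_weak_upper_gradient ::
  "'a::metric_space measure \<Rightarrow> 'a measure \<Rightarrow> real \<Rightarrow> ('a \<Rightarrow> ereal) \<Rightarrow> ('a \<Rightarrow> ennreal) \<Rightarrow> bool" where
  "p_weak_upper_gradient \<mu> m p f \<rho> \<longleftrightarrow> \<rho> \<in> borel_measurable borel \<and>
     p_modulus \<mu> m p {\<gamma>\<in>Gamma_mu \<mu>.
        \<not> (\<bar>f (path_start \<gamma>) - f (path_end \<gamma>)\<bar> \<le> enn2ereal (path_integral \<mu> \<rho> \<gamma>))} = 0"

end

theory Submission
  imports Defs
begin

text \<open>The \<open>p\<close>-weak upper gradient inequality fails only on a path family \<open>\<Gamma>\<close> of \<open>p\<close>-modulus
  zero. Choosing admissible densities \<open>G\<^sub>k\<close> for \<open>\<Gamma>\<close> whose \<open>p\<close>-energies decay fast enough,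
  \<open>g = sup\<^sub>k (k+1) G\<^sub>k\<close> has \<open>\<integral>\<^sub>\<gamma> g = \<infinity>\<close> on every \<open>\<gamma> \<in> \<Gamma>\<close>, while
  \<open>\<integral> g\<^sup>p \<le> \<Sum>\<^sub>k (k+1)\<^sup>p \<integral> G\<^sub>k\<^sup>p\<close> is as small as we like. Then \<open>\<rho> + g\<close> is a genuine upper gradient.\<close>

lemma epow_borel_measurable [measurable]: "epow p \<in> borel \<rightarrow>\<^sub>M borel"
  unfolding epow_def by measurable

lemma epow_mono:
  assumes "0 < p" and "s \<le> t"
  shows "epow p s \<le> epow p t"
  using assms unfolding epow_def
  by (cases s; cases t) (auto simp: top_unique intro!: ennreal_leI powr_mono2)

lemma epow_ennreal_mult:
  assumes "0 < c" and "0 < p"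
  shows "epow p (ennreal c * t) = ennreal (c powr p) * epow p t"
  using assms unfolding epow_def
  by (cases t) (auto simp: ennreal_mult_top ennreal_mult[symmetric] powr_mult enn2real_mult)

lemma epow_SUP_le:
  fixes a :: "'i \<Rightarrow> ennreal"
  assumes p: "0 < p" and bound: "\<And>i. i \<in> I \<Longrightarrow> epow p (a i) \<le> S"
  shows "epow p (SUP i\<in>I. a i) \<le> S"
proof (cases S)
  case (real s)
  define B where "B = s powr (1/p)"
  have "a i \<le> ennreal B" if "i \<in> I" for i
  proof (cases "a i")
    case top
    then show ?thesis using bound[OF that] real unfolding epow_def by (simp add: top_unique)
  next
    case (real r)
    with bound[OF that] \<open>S = ennreal s\<close> \<open>0 \<le> s\<close> have "r powr p \<le> s"
      unfolding epow_def by (auto simp: ennreal_le_iff2)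
    then have "(r powr p) powr (1/p) \<le> B"
      unfolding B_def using p by (intro powr_mono2) auto
    then show ?thesis using real p by (simp add: powr_powr)
  qed
  then have "epow p (SUP i\<in>I. a i) \<le> epow p (ennreal B)"
    using p by (intro epow_mono) (auto simp: SUP_le_iff)
  also have "\<dots> = S"
    using real p unfolding epow_def B_def by (simp add: powr_powr)
  finally show ?thesis .
qed simp

lemma epow_SUP_le_suminf:
  assumes "0 < p"
  shows "epow p (SUP k. a k) \<le> (\<Sum>k. epow p (a k))"
  using assms by (rule epow_SUP_le) (metis ennreal_suminf_lessD not_le order_less_irrefl)

lemma path_integral_mono:
  assumes "\<And>x. g x \<le> h x"
  shows "path_integral \<mu> g \<gamma> \<le> path_integral \<mu> h \<gamma>"
  unfolding path_integral_def using assms by (intro nn_integral_mono mult_right_mono) auto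

lemma compact_path_Im_Gamma_mu:
  assumes "\<gamma> \<in> Gamma_mu \<mu>"
  shows "compact (path_Im \<gamma>)"
  using assms unfolding Gamma_mu_def path_Im_def by (auto intro: compact_continuous_image)

lemma path_integral_cmult:
  assumes "sets \<mu> = sets borel" and "g \<in> borel_measurable borel" and "\<gamma> \<in> Gamma_mu \<mu>"
  shows "path_integral \<mu> (\<lambda>x. c * g x) \<gamma> = c * path_integral \<mu> g \<gamma>"
proof -
  have [measurable]: "path_Im \<gamma> \<in> sets \<mu>"
    using compact_path_Im_Gamma_mu[OF assms(3)] assms(1) by (simp add: borel_closed compact_imp_closed)
  have [measurable]: "g \<in> borel_measurable \<mu>"
    using assms(2) measurable_cong_sets[OF assms(1) refl] by blast
  have "(\<lambda>x. g x * indicator (path_Im \<gamma>) x) \<in> borel_measurable \<mu>"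
    by measurable
  then show ?thesis
    unfolding path_integral_def by (subst nn_integral_cmult[symmetric]) (auto simp: mult.assoc)
qed

lemma p_modulus_less_imp_admissible:
  assumes "p_modulus \<mu> m p \<Gamma> < c"
  obtains g where "g \<in> borel_measurable borel" and "\<And>\<gamma>. \<gamma> \<in> \<Gamma> \<Longrightarrow> 1 \<le> path_integral \<mu> g \<gamma>"
    and "(\<integral>\<^sup>+ x. epow p (g x) \<partial>m) < c"
  using assms unfolding p_modulus_def by (auto simp: INF_less_iff)

lemma path_integral_SUP_scaled_eq_infinity:
  assumes \<mu>: "sets \<mu> = sets borel" and G: "\<And>k. G k \<in> borel_measurable borel"
    and \<gamma>: "\<gamma> \<in> Gamma_mu \<mu>" and adm: "\<And>k. 1 \<le> path_integral \<mu> (G k) \<gamma>"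
  shows "path_integral \<mu> (\<lambda>x. SUP k. of_nat (Suc k) * G k x) \<gamma> = \<infinity>"
    (is "path_integral \<mu> ?g \<gamma> = \<infinity>")
proof -
  have "of_nat k \<le> path_integral \<mu> ?g \<gamma>" for k
  proof -
    have "of_nat k \<le> (of_nat (Suc k) :: ennreal)"
      by simp
    also have "\<dots> \<le> of_nat (Suc k) * path_integral \<mu> (G k) \<gamma>"
      using mult_left_mono[OF adm[of k], of "of_nat (Suc k)"] by simp
    also have "\<dots> = path_integral \<mu> (\<lambda>x. of_nat (Suc k) * G k x) \<gamma>"
      by (intro path_integral_cmult[symmetric] \<mu> G \<gamma>)
    also have "\<dots> \<le> path_integral \<mu> ?g \<gamma>"
      by (intro path_integral_mono SUP_upper) simp
    finally show ?thesis .
  qed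
  then have "(SUP k. of_nat k) \<le> path_integral \<mu> ?g \<gamma>"
    by (rule SUP_least)
  then show ?thesis
    by (simp add: ennreal_SUP_of_nat_eq_top top_unique)
qed

lemma nn_integral_epow_SUP_scaled_le:
  assumes m: "sets m = sets borel" and p: "0 < p" and G: "\<And>k. G k \<in> borel_measurable borel"
  shows "(\<integral>\<^sup>+ x. epow p (SUP k. of_nat (Suc k) * G k x) \<partial>m)
    \<le> (\<Sum>k. ennreal (real (Suc k) powr p) * \<integral>\<^sup>+ x. epow p (G k x) \<partial>m)"
proof -
  have G_m [measurable]: "G k \<in> borel_measurable m" for k
    using G measurable_cong_sets[OF m refl] by blast
  have "(\<integral>\<^sup>+ x. epow p (SUP k. of_nat (Suc k) * G k x) \<partial>m)
      \<le> (\<integral>\<^sup>+ x. (\<Sum>k. epow p (of_nat (Suc k) * G k x)) \<partial>m)"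
    by (intro nn_integral_mono epow_SUP_le_suminf p)
  also have "\<dots> = (\<Sum>k. \<integral>\<^sup>+ x. epow p (of_nat (Suc k) * G k x) \<partial>m)"
    by (rule nn_integral_suminf) measurable
  also have "\<dots> = (\<Sum>k. ennreal (real (Suc k) powr p) * \<integral>\<^sup>+ x. epow p (G k x) \<partial>m)"
    using p by (simp add: ennreal_of_nat_eq_real_of_nat epow_ennreal_mult nn_integral_cmult
      del: of_nat_Suc)
  finally show ?thesis .
qed

lemma p_modulus_zero_imp_infinite_density:
  assumes \<mu>: "sets \<mu> = sets borel" and m: "sets m = sets borel" and p: "0 < p"
    and \<Gamma>: "\<Gamma> \<subseteq> Gamma_mu \<mu>" and mod0: "p_modulus \<mu> m p \<Gamma> = 0" and \<epsilon>: "0 < \<epsilon>"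
  obtains g where "g \<in> borel_measurable borel" and "\<And>\<gamma>. \<gamma> \<in> \<Gamma> \<Longrightarrow> path_integral \<mu> g \<gamma> = \<infinity>"
    and "(\<integral>\<^sup>+ x. epow p (g x) \<partial>m) < ennreal \<epsilon>"
proof -
  define d where "d k = \<epsilon> / (2 ^ (k + 2) * real (Suc k) powr p)" for k :: nat
  have "\<exists>G. G \<in> borel_measurable borel \<and> (\<forall>\<gamma>\<in>\<Gamma>. 1 \<le> path_integral \<mu> G \<gamma>) \<and>
      (\<integral>\<^sup>+ x. epow p (G x) \<partial>m) < ennreal (d k)" for k
  proof -
    have "p_modulus \<mu> m p \<Gamma> < ennreal (d k)"
      using mod0 \<epsilon> unfolding d_def by simp
    then show ?thesis
      by (elim p_modulus_less_imp_admissible) blast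
  qed
  then obtain G where G_meas [measurable]: "\<And>k. G k \<in> borel_measurable borel"
    and G_adm: "\<And>k \<gamma>. \<gamma> \<in> \<Gamma> \<Longrightarrow> 1 \<le> path_integral \<mu> (G k) \<gamma>"
    and G_energy: "\<And>k. (\<integral>\<^sup>+ x. epow p (G k x) \<partial>m) < ennreal (d k)"
    by metis
  define g where "g x = (SUP k. of_nat (Suc k) * G k x)" for x
  have "(\<integral>\<^sup>+ x. epow p (g x) \<partial>m) \<le> (\<Sum>k. ennreal (real (Suc k) powr p) * \<integral>\<^sup>+ x. epow p (G k x) \<partial>m)"
    unfolding g_def by (rule nn_integral_epow_SUP_scaled_le[OF m p G_meas])
  also have "\<dots> \<le> (\<Sum>k. ennreal (\<epsilon> / 4 * (1/2) ^ k))"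
  proof (intro suminf_le allI)
    fix k
    have "ennreal (real (Suc k) powr p) * (\<integral>\<^sup>+ x. epow p (G k x) \<partial>m)
        \<le> ennreal (real (Suc k) powr p) * ennreal (d k)"
      by (intro mult_left_mono less_imp_le G_energy) simp
    also have "\<dots> = ennreal (\<epsilon> / 4 * (1/2) ^ k)"
      using \<epsilon> unfolding d_def by (subst ennreal_mult[symmetric]) (auto simp: field_simps power_add)
    finally show "ennreal (real (Suc k) powr p) * (\<integral>\<^sup>+ x. epow p (G k x) \<partial>m)
        \<le> ennreal (\<epsilon> / 4 * (1/2) ^ k)" .
  qed auto
  also have "\<dots> = ennreal (\<epsilon> / 2)"
    using \<epsilon> sums_mult[OF geometric_sums[of "1/2::real"], of "\<epsilon> / 4"]
    by (intro suminf_ennreal_eq) auto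
  also have "\<dots> < ennreal \<epsilon>"
    using \<epsilon> by (simp add: ennreal_less_iff)
  finally have "(\<integral>\<^sup>+ x. epow p (g x) \<partial>m) < ennreal \<epsilon>" .
  moreover have "g \<in> borel_measurable borel"
    unfolding g_def by measurable
  moreover have "path_integral \<mu> g \<gamma> = \<infinity>" if "\<gamma> \<in> \<Gamma>" for \<gamma>
    unfolding g_def using \<Gamma> that by (intro path_integral_SUP_scaled_eq_infinity \<mu> G_meas G_adm) auto
  ultimately show ?thesis
    using that by blast
qed

lemma upper_gradient_add_infinite_density:
  assumes \<rho>: "\<rho> \<in> borel_measurable borel" and g: "g \<in> borel_measurable borel"
    and ineq: "\<And>\<gamma>. \<gamma> \<in> Gamma_mu \<mu> \<Longrightarrow> path_integral \<mu> g \<gamma> \<noteq> \<infinity> \<Longrightarrow>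
      \<bar>f (path_start \<gamma>) - f (path_end \<gamma>)\<bar> \<le> enn2ereal (path_integral \<mu> \<rho> \<gamma>)"
  shows "upper_gradient \<mu> f (\<lambda>x. \<rho> x + g x)"
  unfolding upper_gradient_def
proof (intro conjI ballI impI)
  show "(\<lambda>x. \<rho> x + g x) \<in> borel_measurable borel"
    using \<rho> g by measurable
next
  fix \<gamma> assume \<gamma>: "\<gamma> \<in> Gamma_mu \<mu>"
  show "\<bar>f (path_start \<gamma>) - f (path_end \<gamma>)\<bar> \<le> enn2ereal (path_integral \<mu> (\<lambda>x. \<rho> x + g x) \<gamma>)"
  proof (cases "path_integral \<mu> g \<gamma> = \<infinity>")
    case True
    have "path_integral \<mu> g \<gamma> \<le> path_integral \<mu> (\<lambda>x. \<rho> x + g x) \<gamma>"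
      by (intro path_integral_mono) simp
    with True show ?thesis by (simp add: top_unique)
  next
    case False
    have "path_integral \<mu> \<rho> \<gamma> \<le> path_integral \<mu> (\<lambda>x. \<rho> x + g x) \<gamma>"
      by (intro path_integral_mono) simp
    then have "enn2ereal (path_integral \<mu> \<rho> \<gamma>) \<le> enn2ereal (path_integral \<mu> (\<lambda>x. \<rho> x + g x) \<gamma>)"
      by (simp add: less_eq_ennreal.rep_eq)
    with ineq[OF \<gamma> False] show ?thesis by (rule order_trans)
  qed
qed

theorem proposition3p5:
  fixes \<mu> m :: "'a::metric_space measure"
    and p \<epsilon> :: real
    and f :: "'a \<Rightarrow> ereal"
    and \<rho> :: "'a \<Rightarrow> ennreal"
  assumes "sets \<mu> = sets borel"
    and "\<And>x. emeasure \<mu> {x} = 0"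
    and "sets m = sets borel"
    and "0 < p"
    and "p_weak_upper_gradient \<mu> m p f \<rho>"
    and "0 < \<epsilon>"
  shows "\<exists>\<rho>\<epsilon>. upper_gradient \<mu> f \<rho>\<epsilon> \<and> (\<forall>x. \<rho> x \<le> \<rho>\<epsilon> x) \<and>
           (\<exists>g. g \<in> borel_measurable borel \<and> (\<forall>x. \<rho>\<epsilon> x = \<rho> x + g x) \<and>
                (\<integral>\<^sup>+ x. epow p (g x) \<partial>m) < ennreal (\<epsilon> powr p))"
proof -
  define \<Gamma> where "\<Gamma> = {\<gamma>\<in>Gamma_mu \<mu>.
    \<not> \<bar>f (path_start \<gamma>) - f (path_end \<gamma>)\<bar> \<le> enn2ereal (path_integral \<mu> \<rho> \<gamma>)}"
  have \<rho>_meas: "\<rho> \<in> borel_measurable borel" and "p_modulus \<mu> m p \<Gamma> = 0"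
    using assms(5) unfolding p_weak_upper_gradient_def \<Gamma>_def by auto
  then obtain g where g_meas: "g \<in> borel_measurable borel"
    and g_infinite: "\<And>\<gamma>. \<gamma> \<in> \<Gamma> \<Longrightarrow> path_integral \<mu> g \<gamma> = \<infinity>"
    and g_energy: "(\<integral>\<^sup>+ x. epow p (g x) \<partial>m) < ennreal (\<epsilon> powr p)"
    using p_modulus_zero_imp_infinite_density[OF assms(1,3,4), of \<Gamma> "\<epsilon> powr p"] assms(6)
    unfolding \<Gamma>_def by auto
  have "upper_gradient \<mu> f (\<lambda>x. \<rho> x + g x)"
    using \<rho>_meas g_meas by (rule upper_gradient_add_infinite_density) (use g_infinite \<Gamma>_def in auto)
  with g_meas g_energy show ?thesis
    by (intro exI[of _ "\<lambda>x. \<rho> x + g x"]) auto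
qed

end
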